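(* Assume $X_0\in L^\infty$, $x\in\mathbb{R}$, and let $z\ge\frac{x}{\mathrm{E}[\rho]}-Q_0(1)$. If $X^*$ is variance-minimal in $\mathscr{X}_{\mathrm{icx}}(x,X_0+z)$, then $\psi(X^* )=z$.
   Context: $(\Omega,\mathcal{F},\mathbb{P})$ is a complete nonatomic probability space. $\rho\in L^2$ with $\mathbb{P}(\rho>0)=1$ and $\mathrm{Var}[\rho]>0$. For a random variable $X$, $Q_X(t)=\inf\{y:\mathbb{P}(X\le y)>t\}$ for $t\in[0,1)$, $Q_X(1):=\lim_{t\uparrow1}Q_X(t)$; $Q_0:=Q_{X_0}$. For random variables $X,Y$, $X\succeq_{\mathrm{icx}}Y$ means $\mathrm{E}[f(X)]\ge\mathrm{E}[f(Y)]$ for all increasing convex $f$ (equivalently $\int_t^1Q_X\ge\int_t^1Q_Y$ for all $t\in[0,1]$). $\mathscr{X}_{\mathrm{icx}}(x,Y_0)=\{X\in L^2:\mathrm{E}[\rho X]\le x,\ X\succeq_{\mathrm{icx}}Y_0\}$, and $X$ is variance-minimal in it if it minimizes $\mathrm{Var}[X]$ over it. The beating performance of $X\in L^2$ is $\psi(X)=\sup\{m\in\mathbb{R}: X-m\succeq_{\mathrm{icx}}X_0\}$ (with $\sup\emptyset=-\infty$). *)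

theory Defs
  imports "HOL-Probability.Probability"
begin

definition nonatomic :: "'a measure \<Rightarrow> bool" where
  "nonatomic M \<longleftrightarrow> \<not> (\<exists>A\<in>sets M. measure M A > 0 \<and>
      (\<forall>B\<in>sets M. B \<subseteq> A \<longrightarrow> measure M B = 0 \<or> measure M B = measure M A))"

definition L2 :: "'a measure \<Rightarrow> ('a \<Rightarrow> real) set" where
  "L2 M = {X. X \<in> borel_measurable M \<and> integrable M (\<lambda>\<omega>. (X \<omega>)\<^sup>2)}"

definition Linf :: "'a measure \<Rightarrow> ('a \<Rightarrow> real) set" where
  "Linf M = {X. X \<in> borel_measurable M \<and> (\<exists>C. AE \<omega> in M. \<bar>X \<omega>\<bar> \<le> C)}"

definition quantile :: "'a measure \<Rightarrow> ('a \<Rightarrow> real) \<Rightarrow> real \<Rightarrow> real" where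
  "quantile M X t = Inf {y. measure M {\<omega>\<in>space M. X \<omega> \<le> y} > t}"

definition quantile_one :: "'a measure \<Rightarrow> ('a \<Rightarrow> real) \<Rightarrow> real" where
  "quantile_one M X = Lim (at_left 1) (quantile M X)"

text \<open>For integrable X, Y and increasing convex f, E[f(X)] lies in (-\<infinity>, +\<infinity>]
  and is +\<infinity> exactly when f \<circ> X is not integrable; the inequality in the
  extended reals is spelled out accordingly.\<close>
definition icx_ge :: "'a measure \<Rightarrow> ('a \<Rightarrow> real) \<Rightarrow> ('a \<Rightarrow> real) \<Rightarrow> bool" where
  "icx_ge M X Y \<longleftrightarrow> (\<forall>f::real \<Rightarrow> real. mono f \<and> convex_on UNIV f \<longrightarrow>
      (\<not> integrable M (\<lambda>\<omega>. f (X \<omega>)) \<or>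
       (integrable M (\<lambda>\<omega>. f (Y \<omega>)) \<and>
        integral\<^sup>L M (\<lambda>\<omega>. f (Y \<omega>)) \<le> integral\<^sup>L M (\<lambda>\<omega>. f (X \<omega>)))))"

definition X_icx :: "'a measure \<Rightarrow> ('a \<Rightarrow> real) \<Rightarrow> real \<Rightarrow> ('a \<Rightarrow> real) \<Rightarrow> ('a \<Rightarrow> real) set" where
  "X_icx M \<rho> x Y0 = {X \<in> L2 M. integral\<^sup>L M (\<lambda>\<omega>. \<rho> \<omega> * X \<omega>) \<le> x \<and> icx_ge M X Y0}"

definition variance_minimal :: "'a measure \<Rightarrow> ('a \<Rightarrow> real) set \<Rightarrow> ('a \<Rightarrow> real) \<Rightarrow> bool" where
  "variance_minimal M S X \<longleftrightarrow> X \<in> S \<and>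
     (\<forall>Y\<in>S. prob_space.variance M X \<le> prob_space.variance M Y)"

definition beating_perf :: "'a measure \<Rightarrow> ('a \<Rightarrow> real) \<Rightarrow> ('a \<Rightarrow> real) \<Rightarrow> ereal" where
  "beating_perf M X0 X = Sup (ereal ` {m. icx_ge M (\<lambda>\<omega>. X \<omega> - m) X0})"

end

(*
  If Xs - m dominated X0 for some m > z, then Xs would dominate X0 + z with slack m - z.
  Mixing Xs - (m - z) with a constant above ess sup (X0 + z) keeps the domination and,
  for a suitable weight l < 1, the budget, while multiplying the variance by l^2; so
  variance-minimality forces Xs to be a.s. a constant k. Then the constant k - m dominates
  X0, i.e. X0 <= k - m a.s., so Q0(1) <= k - m, while the budget gives k <= x / E[rho];
  hence m <= x / E[rho] - Q0(1) <= z. The converse bound psi(Xs) >= z is just the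
  shift of Xs >=icx X0 + z.
*)
theory Submission
  imports Defs
begin

lemma L2_mult_integrable:
  assumes "X \<in> L2 M" "Y \<in> L2 M"
  shows "integrable M (\<lambda>w. X w * Y w)"
proof (rule Bochner_Integration.integrable_bound)
  show "integrable M (\<lambda>w. (X w)\<^sup>2 + (Y w)\<^sup>2)" using assms unfolding L2_def by auto
  show "(\<lambda>w. X w * Y w) \<in> borel_measurable M" using assms unfolding L2_def by auto
  have "\<bar>a * b\<bar> \<le> a\<^sup>2 + b\<^sup>2" for a b :: real
  proof -
    have "2 * \<bar>a\<bar> * \<bar>b\<bar> \<le> a\<^sup>2 + b\<^sup>2"
      using sum_squares_bound[of "\<bar>a\<bar>" "\<bar>b\<bar>"] by (simp add: power2_eq_square)
    moreover have "0 \<le> \<bar>a\<bar> * \<bar>b\<bar>" by simp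
    ultimately show ?thesis unfolding abs_mult by linarith
  qed
  then show "AE w in M. norm (X w * Y w) \<le> norm ((X w)\<^sup>2 + (Y w)\<^sup>2)"
    by simp
qed

lemma integral_mult_AE_eq_const:
  fixes X Y :: "'a \<Rightarrow> real"
  assumes "AE w in M. X w = k" "X \<in> borel_measurable M" "Y \<in> borel_measurable M"
  shows "integral\<^sup>L M (\<lambda>w. Y w * X w) = k * integral\<^sup>L M Y"
proof -
  have "integral\<^sup>L M (\<lambda>w. Y w * X w) = integral\<^sup>L M (\<lambda>w. Y w * k)"
    using assms by (intro integral_cong_AE) (auto elim: AE_mp)
  then show ?thesis by simp
qed

lemma Linf_add_const:
  assumes "X \<in> Linf M"
  shows "(\<lambda>w. X w + c) \<in> Linf M"
proof -
  obtain C where C: "AE w in M. \<bar>X w\<bar> \<le> C" and "X \<in> borel_measurable M"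
    using assms unfolding Linf_def by auto
  moreover from C have "AE w in M. \<bar>X w + c\<bar> \<le> C + \<bar>c\<bar>" by eventually_elim auto
  ultimately show ?thesis unfolding Linf_def by auto
qed

lemma ex_mixing_weight:
  fixes p q :: real
  assumes "0 < q"
  obtains l where "0 \<le> l" "l < 1" "(1 - l) * p \<le> l * q"
proof
  define a where "a = max p 0"
  have a: "0 \<le> a" "p \<le> a" by (simp_all add: a_def)
  show "0 \<le> a / (a + q)" "a / (a + q) < 1" using a assms by simp_all
  have "(1 - a / (a + q)) * p \<le> (1 - a / (a + q)) * a"
    using a assms by (intro mult_left_mono) simp_all
  also have "\<dots> = a / (a + q) * q" using a assms by (simp add: field_simps)
  finally show "(1 - a / (a + q)) * p \<le> a / (a + q) * q" .
qed

lemma convex_on_affine_comp: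
  fixes f :: "real \<Rightarrow> real"
  assumes "convex_on UNIV f" "a \<ge> 0"
  shows "convex_on UNIV (\<lambda>t. f (a * t + b))"
proof (rule convex_onI)
  fix s t u :: real assume u: "0 < u" "u < 1"
  have "a * ((1 - u) * s + u * t) + b = (1 - u) * (a * s + b) + u * (a * t + b)"
    by (simp add: algebra_simps)
  then show "f (a * ((1 - u) *\<^sub>R s + u *\<^sub>R t) + b) \<le> (1 - u) * f (a * s + b) + u * f (a * t + b)"
    using convex_onD[OF assms(1), of u "a * s + b" "a * t + b"] u by simp
qed simp

lemma convex_on_pos_part: "convex_on UNIV (\<lambda>t::real. max (t - a) 0)"
proof (rule convex_onI)
  fix s t u :: real assume u: "0 < u" "u < 1"
  have "(1 - u) * (s - a) \<le> (1 - u) * max (s - a) 0" "u * (t - a) \<le> u * max (t - a) 0"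
    using u by (auto intro: mult_left_mono)
  moreover have "(1 - u) *\<^sub>R s + u *\<^sub>R t - a = (1 - u) * (s - a) + u * (t - a)"
    by (simp add: algebra_simps)
  moreover have "0 \<le> (1 - u) * max (s - a) 0" "0 \<le> u * max (t - a) 0"
    using u by auto
  ultimately show "max ((1 - u) *\<^sub>R s + u *\<^sub>R t - a) 0 \<le> (1 - u) * max (s - a) 0 + u * max (t - a) 0"
    by (intro max.boundedI; linarith)
qed simp

lemma icx_ge_shift:
  assumes "icx_ge M A Y"
  shows "icx_ge M (\<lambda>w. A w + s) (\<lambda>w. Y w + s)"
  unfolding icx_ge_def
proof (intro allI impI)
  fix f :: "real \<Rightarrow> real" assume f: "mono f \<and> convex_on UNIV f"
  then have "mono (\<lambda>t. f (t + s)) \<and> convex_on UNIV (\<lambda>t. f (t + s))"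
    using convex_on_affine_comp[of f 1 s] by (auto simp: mono_def)
  with assms show "\<not> integrable M (\<lambda>w. f (A w + s)) \<or>
      integrable M (\<lambda>w. f (Y w + s)) \<and> integral\<^sup>L M (\<lambda>w. f (Y w + s)) \<le> integral\<^sup>L M (\<lambda>w. f (A w + s))"
    unfolding icx_ge_def by blast
qed

lemma Lim_at_left_le_of_mono_on:
  fixes f :: "real \<Rightarrow> real"
  assumes f: "mono_on {a..<b} f" and "a < b" and B: "\<And>t. a \<le> t \<Longrightarrow> t < b \<Longrightarrow> f t \<le> B"
  shows "Lim (at_left b) f \<le> B"
proof -
  define L where "L = (SUP t\<in>{a..<b}. f t)"
  have bdd: "bdd_above (f ` {a..<b})" using B by (intro bdd_aboveI[of _ B]) auto
  have "(f \<longlongrightarrow> L) (at_left b)"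
  proof (rule increasing_tendsto)
    show "\<forall>\<^sub>F t in at_left b. f t \<le> L"
      using eventually_at_left_real[OF \<open>a < b\<close>]
      by eventually_elim (auto simp: L_def intro!: cSUP_upper bdd)
    fix y assume "y < L"
    then obtain t0 where t0: "t0 \<in> {a..<b}" "y < f t0"
      unfolding L_def using less_cSUP_iff[OF _ bdd] \<open>a < b\<close> by auto
    then have "t0 < b" by simp
    from eventually_at_left_real[OF this] show "\<forall>\<^sub>F t in at_left b. y < f t"
    proof eventually_elim
      case (elim t)
      then show ?case using mono_onD[OF f, of t0 t] t0 by auto
    qed
  qed
  then have "Lim (at_left b) f = L" by (rule tendsto_Lim[OF trivial_limit_at_left_real])
  also have "L \<le> B" unfolding L_def using B \<open>a < b\<close> by (auto intro!: cSUP_least)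
  finally show ?thesis .
qed

lemma (in finite_measure) integrable_mono_comp_Linf:
  fixes f :: "real \<Rightarrow> real"
  assumes "mono f" "Y \<in> Linf M"
  shows "integrable M (\<lambda>w. f (Y w))"
proof -
  obtain C where C: "AE w in M. \<bar>Y w\<bar> \<le> C" and [measurable]: "Y \<in> borel_measurable M"
    using assms(2) unfolding Linf_def by auto
  have [measurable]: "f \<in> borel_measurable borel" using assms(1) by (rule borel_measurable_mono)
  have "AE w in M. norm (f (Y w)) \<le> \<bar>f (- C)\<bar> + \<bar>f C\<bar>"
    using C
  proof eventually_elim
    case (elim w)
    then have "f (- C) \<le> f (Y w)" "f (Y w) \<le> f C" using assms(1) by (auto simp: mono_def)
    then show ?case by auto
  qed
  then show ?thesis by (rule integrable_const_bound) simp
qed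

context prob_space
begin

lemma L2_imp_integrable: "X \<in> L2 M \<Longrightarrow> integrable M X"
  unfolding L2_def by (blast intro: square_integrable_imp_integrable)

lemma L2_affine:
  assumes "X \<in> L2 M"
  shows "(\<lambda>w. a * X w + b) \<in> L2 M"
proof -
  have "integrable M (\<lambda>w. a\<^sup>2 * (X w)\<^sup>2 + (2 * a * b) * X w + b\<^sup>2)"
    using assms L2_imp_integrable[OF assms] unfolding L2_def by auto
  moreover have "(\<lambda>w. a\<^sup>2 * (X w)\<^sup>2 + (2 * a * b) * X w + b\<^sup>2) = (\<lambda>w. (a * X w + b)\<^sup>2)"
    by (auto simp: power2_eq_square algebra_simps)
  ultimately show ?thesis using assms unfolding L2_def by auto
qed

lemma variance_affine_L2:
  assumes "X \<in> L2 M"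
  shows "variance (\<lambda>w. a * X w + b) = a\<^sup>2 * variance X"
proof -
  have "expectation (\<lambda>w. a * X w + b) = a * expectation X + b"
    using L2_imp_integrable[OF assms] by (simp add: prob_space)
  then have "(\<lambda>w. (a * X w + b - expectation (\<lambda>w. a * X w + b))\<^sup>2) = (\<lambda>w. a\<^sup>2 * (X w - expectation X)\<^sup>2)"
    by (simp add: power2_eq_square algebra_simps)
  then show ?thesis by simp
qed

lemma variance_eq_0_imp_AE_eq_expectation:
  assumes "X \<in> L2 M" "variance X = 0"
  shows "AE w in M. X w = expectation X"
proof -
  have "integrable M (\<lambda>w. (X w - expectation X)\<^sup>2)"
    using L2_affine[OF assms(1), of 1 "- expectation X"] unfolding L2_def by simp
  then have "AE w in M. (X w - expectation X)\<^sup>2 = 0"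
    using assms(2) by (subst integral_nonneg_eq_0_iff_AE[symmetric]) auto
  then show ?thesis by eventually_elim simp
qed

lemma expectation_pos:
  fixes X :: "'a \<Rightarrow> real"
  assumes "integrable M X" "AE w in M. X w > 0"
  shows "expectation X > 0"
  using integral_less_AE_space[of "\<lambda>_. 0" X] assms emeasure_space_1 by simp

lemma icx_ge_mix_const:
  assumes A: "icx_ge M A Y" and Y: "Y \<in> Linf M" "AE w in M. Y w \<le> c"
    and l: "0 \<le> l" "l \<le> 1"
  shows "icx_ge M (\<lambda>w. l * A w + (1 - l) * c) Y"
  unfolding icx_ge_def
proof (intro allI impI)
  fix f :: "real \<Rightarrow> real" assume f: "mono f \<and> convex_on UNIV f"
  define g where "g t = f (l * t + (1 - l) * c)" for t
  have "mono g" using f l unfolding g_def mono_def by (simp add: mult_left_mono)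
  moreover have "convex_on UNIV g" unfolding g_def using f l convex_on_affine_comp by blast
  ultimately have dom: "integrable M (\<lambda>w. g (A w)) \<Longrightarrow>
      integrable M (\<lambda>w. g (Y w)) \<and> integral\<^sup>L M (\<lambda>w. g (Y w)) \<le> integral\<^sup>L M (\<lambda>w. g (A w))"
    using A unfolding icx_ge_def by blast
  have fY: "integrable M (\<lambda>w. f (Y w))" using f Y(1) by (intro integrable_mono_comp_Linf) auto
  have f_le_g: "AE w in M. f (Y w) \<le> g (Y w)"
    using Y(2)
  proof eventually_elim
    case (elim w)
    have "(1 - l) * Y w \<le> (1 - l) * c" using elim l by (intro mult_left_mono) auto
    then have "Y w \<le> l * Y w + (1 - l) * c" by (simp add: algebra_simps)
    then show ?case unfolding g_def using f by (auto simp: mono_def)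
  qed
  show "\<not> integrable M (\<lambda>w. f (l * A w + (1 - l) * c)) \<or>
      integrable M (\<lambda>w. f (Y w)) \<and>
      integral\<^sup>L M (\<lambda>w. f (Y w)) \<le> integral\<^sup>L M (\<lambda>w. f (l * A w + (1 - l) * c))"
  proof (cases "integrable M (\<lambda>w. f (l * A w + (1 - l) * c))")
    case True
    then have "integrable M (\<lambda>w. g (A w))" by (simp add: g_def)
    with dom have gY: "integrable M (\<lambda>w. g (Y w))"
      and "integral\<^sup>L M (\<lambda>w. g (Y w)) \<le> integral\<^sup>L M (\<lambda>w. g (A w))" by auto
    moreover have "integral\<^sup>L M (\<lambda>w. f (Y w)) \<le> integral\<^sup>L M (\<lambda>w. g (Y w))"
      using fY gY f_le_g by (rule integral_mono_AE)
    ultimately show ?thesis using fY by (simp add: g_def)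
  qed simp
qed

lemma icx_ge_AE_const_imp_AE_le:
  fixes A Y :: "'a \<Rightarrow> real"
  assumes "icx_ge M A Y" "AE w in M. A w = k" and [measurable]: "A \<in> borel_measurable M"
  shows "AE w in M. Y w \<le> k"
proof -
  define f where "f t = max (t - k) 0" for t :: real
  have "mono f" by (auto simp: f_def mono_def)
  have "convex_on UNIV f" unfolding f_def by (rule convex_on_pos_part)
  have fAm: "(\<lambda>w. f (A w)) \<in> borel_measurable M" unfolding f_def by measurable
  from assms(2) have fA: "AE w in M. f (A w) = 0" by eventually_elim (simp add: f_def)
  then have "integrable M (\<lambda>w. f (A w))"
    using integrable_cong_AE[OF fAm borel_measurable_const fA] by simp
  with assms(1) \<open>mono f\<close> \<open>convex_on UNIV f\<close> have fY: "integrable M (\<lambda>w. f (Y w))"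
    and dom: "integral\<^sup>L M (\<lambda>w. f (Y w)) \<le> integral\<^sup>L M (\<lambda>w. f (A w))"
    unfolding icx_ge_def by blast+
  moreover have "integral\<^sup>L M (\<lambda>w. f (A w)) = 0"
    using integral_cong_AE[OF fAm borel_measurable_const fA] by simp
  moreover have "0 \<le> integral\<^sup>L M (\<lambda>w. f (Y w))"
    by (intro integral_nonneg_AE) (simp add: f_def)
  ultimately have "integral\<^sup>L M (\<lambda>w. f (Y w)) = 0" by linarith
  then have "AE w in M. f (Y w) = 0"
    using integral_nonneg_eq_0_iff_AE[OF fY] by (simp add: f_def)
  then show ?thesis by eventually_elim (simp add: f_def)
qed

lemma quantile_set_bdd_below:
  fixes X :: "'a \<Rightarrow> real"
  assumes [measurable]: "X \<in> borel_measurable M"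
    and "AE w in M. L \<le> X w" "0 \<le> t"
  shows "bdd_below {y. prob {w\<in>space M. X w \<le> y} > t}"
proof (rule bdd_belowI)
  fix y assume y: "y \<in> {y. prob {w\<in>space M. X w \<le> y} > t}"
  show "L \<le> y"
  proof (rule ccontr)
    assume "\<not> L \<le> y"
    with assms(2) have "AE w in M. \<not> X w \<le> y" by (auto elim: AE_mp)
    then have "prob {w\<in>space M. X w \<le> y} = 0" by (simp add: prob_Collect_eq_0)
    with y \<open>0 \<le> t\<close> show False by simp
  qed
qed

lemma quantile_set_mem:
  fixes X :: "'a \<Rightarrow> real"
  assumes [measurable]: "X \<in> borel_measurable M"
    and "AE w in M. X w \<le> B" "t < 1"
  shows "B \<in> {y. prob {w\<in>space M. X w \<le> y} > t}"
  using prob_Collect_eq_1[of "\<lambda>w. X w \<le> B"] assms(2,3) by simp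

lemma quantile_le:
  fixes X :: "'a \<Rightarrow> real"
  assumes "X \<in> borel_measurable M" "AE w in M. L \<le> X w" "AE w in M. X w \<le> B"
    and "0 \<le> t" "t < 1"
  shows "quantile M X t \<le> B"
  unfolding quantile_def using assms
  by (intro cInf_lower quantile_set_mem quantile_set_bdd_below)

lemma quantile_mono_on:
  fixes X :: "'a \<Rightarrow> real"
  assumes "X \<in> borel_measurable M" "AE w in M. L \<le> X w" "AE w in M. X w \<le> B"
  shows "mono_on {0..<1} (quantile M X)"
proof (rule mono_onI)
  fix s t :: real assume "s \<in> {0..<1}" "t \<in> {0..<1}" "s \<le> t"
  then show "quantile M X s \<le> quantile M X t"
    unfolding quantile_def using assms
    by (intro cInf_superset_mono quantile_set_bdd_below) (auto dest: quantile_set_mem)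
qed

lemma quantile_one_le:
  assumes "X \<in> Linf M" "AE w in M. X w \<le> B"
  shows "quantile_one M X \<le> B"
proof -
  obtain C where C: "AE w in M. \<bar>X w\<bar> \<le> C" and X: "X \<in> borel_measurable M"
    using assms(1) unfolding Linf_def by auto
  from C have "AE w in M. - C \<le> X w" by eventually_elim auto
  with X assms(2) show ?thesis
    unfolding quantile_one_def
    by (intro Lim_at_left_le_of_mono_on[where a=0] quantile_mono_on quantile_le) auto
qed

lemma variance_minimal_X_icx_slack_imp_variance_eq_0:
  assumes \<rho>: "\<rho> \<in> L2 M" "expectation \<rho> > 0" and Y: "Y \<in> Linf M"
    and Xs: "variance_minimal M (X_icx M \<rho> x Y) Xs"
    and slack: "icx_ge M (\<lambda>w. Xs w - d) Y" "d > 0"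
  shows "variance Xs = 0"
proof (rule ccontr)
  assume "variance Xs \<noteq> 0"
  with variance_positive[of Xs] have pos: "variance Xs > 0" by linarith
  from Xs have L2: "Xs \<in> L2 M" and budget: "integral\<^sup>L M (\<lambda>w. \<rho> w * Xs w) \<le> x"
    and min: "\<And>X. X \<in> X_icx M \<rho> x Y \<Longrightarrow> variance Xs \<le> variance X"
    unfolding variance_minimal_def X_icx_def by auto
  obtain c where "AE w in M. \<bar>Y w\<bar> \<le> c" using Y unfolding Linf_def by auto
  then have c: "AE w in M. Y w \<le> c" by eventually_elim auto
  define E where "E = expectation \<rho>"
  have "0 < d * E" using slack(2) \<rho>(2) by (simp add: E_def)
  then obtain l where l: "0 \<le> l" "l < 1"
    and mix_budget: "(1 - l) * (c * E - x) \<le> l * (d * E)"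
    by (rule ex_mixing_weight)
  txt \<open>The mixture \<open>l (Xs - d) + (1 - l) c\<close> still dominates \<open>Y\<close>, meets the budget by
    the choice of \<open>l\<close>, and has variance \<open>l\<^sup>2 var Xs\<close>.\<close>
  define X' where "X' w = l * Xs w + ((1 - l) * c - l * d)" for w
  have "X' \<in> X_icx M \<rho> x Y"
    unfolding X_icx_def
  proof (intro CollectI conjI)
    show "X' \<in> L2 M" unfolding X'_def using L2 by (rule L2_affine)
    have "integral\<^sup>L M (\<lambda>w. \<rho> w * X' w)
        = l * integral\<^sup>L M (\<lambda>w. \<rho> w * Xs w) + ((1 - l) * c - l * d) * E"
      using L2_mult_integrable[OF \<rho>(1) L2] L2_imp_integrable[OF \<rho>(1)]
      by (simp add: X'_def E_def distrib_left mult.left_commute)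
    also have "\<dots> \<le> x"
    proof -
      have "l * integral\<^sup>L M (\<lambda>w. \<rho> w * Xs w) \<le> l * x" using budget l by (intro mult_left_mono) auto
      with mix_budget show ?thesis by (simp add: algebra_simps)
    qed
    finally show "integral\<^sup>L M (\<lambda>w. \<rho> w * X' w) \<le> x" .
    have "X' = (\<lambda>w. l * (Xs w - d) + (1 - l) * c)"
      by (auto simp: X'_def algebra_simps)
    then show "icx_ge M X' Y" using icx_ge_mix_const[OF slack(1) Y c] l by simp
  qed
  then have "variance Xs \<le> l\<^sup>2 * variance Xs"
    using min variance_affine_L2[OF L2] unfolding X'_def by metis
  moreover have "l\<^sup>2 < 1" using l by (simp add: power_less_one_iff abs_less_iff)
  ultimately show False using pos by (simp add: mult_le_cancel_right1)
qed

end

theorem proposition8p2: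
  fixes M :: "'a measure" and \<rho> X0 Xs :: "'a \<Rightarrow> real" and x z :: real
  assumes "prob_space M" and "complete_measure M" and "nonatomic M"
    and "\<rho> \<in> L2 M" and "AE \<omega> in M. \<rho> \<omega> > 0" and "prob_space.variance M \<rho> > 0"
    and "X0 \<in> Linf M"
    and "z \<ge> x / prob_space.expectation M \<rho> - quantile_one M X0"
    and "variance_minimal M (X_icx M \<rho> x (\<lambda>\<omega>. X0 \<omega> + z)) Xs"
  shows "beating_perf M X0 Xs = ereal z"
proof -
  interpret prob_space M by fact
  from assms(9) have Xs: "Xs \<in> L2 M" "integral\<^sup>L M (\<lambda>w. \<rho> w * Xs w) \<le> x"
    "icx_ge M Xs (\<lambda>w. X0 w + z)"
    unfolding variance_minimal_def X_icx_def by auto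
  have E: "expectation \<rho> > 0" using assms(4,5) by (intro expectation_pos L2_imp_integrable)
  have X0z: "(\<lambda>w. X0 w + z) \<in> Linf M" using assms(7) by (rule Linf_add_const)
  have "m \<le> z" if dom: "icx_ge M (\<lambda>w. Xs w - m) X0" for m
  proof (rule ccontr)
    assume "\<not> m \<le> z"
    have "icx_ge M (\<lambda>w. Xs w - (m - z)) (\<lambda>w. X0 w + z)"
      using icx_ge_shift[OF dom, of z] by (simp add: algebra_simps)
    with \<open>\<not> m \<le> z\<close> have "variance Xs = 0"
      using variance_minimal_X_icx_slack_imp_variance_eq_0[OF assms(4) E X0z assms(9)] by simp
    with Xs(1) have const: "AE w in M. Xs w = expectation Xs"
      by (rule variance_eq_0_imp_AE_eq_expectation)
    then have "AE w in M. Xs w - m = expectation Xs - m" by eventually_elim simp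
    then have "AE w in M. X0 w \<le> expectation Xs - m"
      using Xs(1) unfolding L2_def by (intro icx_ge_AE_const_imp_AE_le[OF dom]) auto
    then have "quantile_one M X0 \<le> expectation Xs - m" using assms(7) by (intro quantile_one_le)
    moreover have "expectation Xs \<le> x / expectation \<rho>"
      using Xs(2) integral_mult_AE_eq_const[OF const] Xs(1) L2_imp_integrable[OF assms(4)] E
      unfolding L2_def by (simp add: pos_le_divide_eq)
    ultimately show False using assms(8) \<open>\<not> m \<le> z\<close> by linarith
  qed
  moreover have "icx_ge M (\<lambda>w. Xs w - z) X0" using icx_ge_shift[OF Xs(3), of "- z"] by simp
  ultimately show ?thesis unfolding beating_perf_def by (intro antisym Sup_least Sup_upper) auto
qed

end
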